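(* Let $(X,S)$ be an association scheme with the trivial partition $S=\{\mathbf{1},\sigma\}$, where $\mathbf{1}=\{(x,x)\mid x\in X\}$ and $\sigma=(X\times X)\setminus\mathbf{1}$. If $\sharp X\geq3$, then the group $h\mathrm{aut}(\jmath(X,S))$ is isomorphic to the symmetric group on $\sharp X$ letters. If $\sharp X=2$, then $h\mathrm{aut}(\jmath(X,S))$ is trivial.
   Context: An association scheme is a pair $(X,S)$ with $X$ a finite set and $S$ a partition of $X\times X$ containing $\{(x,x)\mid x\in X\}$, closed under $g\mapsto g^*=\{(y,x)\mid(x,y)\in g\}$, such that for all $e,f,g\in S$ the number $\sharp\{y\in X\mid(x,y)\in e,(y,z)\in f\}$ is the same for all $(x,z)\in g$. The quasi-schemoid $\jmath(X,S)=(\mathcal{C},S)$ has $ob(\mathcal{C})=X$, $\mathrm{Hom}_{\mathcal{C}}(y,x)=\{(x,y)\}$, composition $(z,x)\circ(x,y)=(z,y)$, and partition $S$ of $mor(\mathcal{C})=X\times X$. A morphism of quasi-schemoids is a functor sending each block of the source partition into some block of the target partition. Product: $(\mathcal{C},S)\times(\mathcal{E},S')=(\mathcal{C}\times\mathcal{E},\{\sigma\times\tau\})$. $[1]$ has objects $0,1$ and one non-identity morphism $0\to1$; $I=([1],\{\{f\}\}_{f})$. A homotopy $H\colon F\Rightarrow G$ is a morphism $H\colon(\mathcal{C},S)\times I\to(\mathcal{D},S')$ with $H\circ\varepsilon_0=F$, $H\circ\varepsilon_1=G$ ($\varepsilon_i(a)=(a,i)$, $\varepsilon_i(f)=(f,1_i)$).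 $F\sim G$ means there is a homotopy $F\Rightarrow G$ or $G\Rightarrow F$; $F\simeq G$ means a finite chain $F=F_0\sim\cdots\sim F_n=G$; $\simeq$ is an equivalence relation compatible with composition. A self-homotopy equivalence of $A$ is a morphism $F\colon A\to A$ for which there is $G\colon A\to A$ with $FG\simeq1$ and $GF\simeq1$; $h\mathrm{aut}(A)$ is the group of $\simeq$-classes of self-homotopy equivalences of $A$ under composition. *)

theory Defs
  imports "HOL-Algebra.Sym_Groups"
begin

record ('o, 'm) qschemoid =
  Obj  :: "'o set"
  Mor  :: "'m set"
  Dom  :: "'m \<Rightarrow> 'o"
  Cod  :: "'m \<Rightarrow> 'o"
  Idm  :: "'o \<Rightarrow> 'm"
  Comp :: "'m \<Rightarrow> 'm \<Rightarrow> 'm"   (* Comp g f = g \<circ> f, defined when Dom g = Cod f *)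
  Part :: "'m set set"

definition assoc_scheme :: "'a set \<Rightarrow> ('a \<times> 'a) set set \<Rightarrow> bool" where
  "assoc_scheme X S \<longleftrightarrow>
     finite X \<and>
     \<Union>S = X \<times> X \<and> {} \<notin> S \<and>
     (\<forall>g\<in>S. \<forall>h\<in>S. g \<noteq> h \<longrightarrow> g \<inter> h = {}) \<and>
     Id_on X \<in> S \<and>
     (\<forall>g\<in>S. g\<inverse> \<in> S) \<and>
     (\<forall>e\<in>S. \<forall>f\<in>S. \<forall>g\<in>S. \<forall>p\<in>g. \<forall>q\<in>g.
        card {y\<in>X. (fst p, y) \<in> e \<and> (y, snd p) \<in> f}
      = card {y\<in>X. (fst q, y) \<in> e \<and> (y, snd q) \<in> f})"

(* The quasi-schemoid \<jmath>(X,S): the morphism (x,y) goes from y to x *)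
definition jmath :: "'a set \<Rightarrow> ('a \<times> 'a) set set \<Rightarrow> ('a, 'a \<times> 'a) qschemoid" where
  "jmath X S = \<lparr> Obj = X, Mor = X \<times> X, Dom = snd, Cod = fst,
                Idm = (\<lambda>x. (x, x)), Comp = (\<lambda>g f. (fst g, snd f)), Part = S \<rparr>"

definition qs_morphism ::
  "('o1, 'm1) qschemoid \<Rightarrow> ('o2, 'm2) qschemoid \<Rightarrow> ('o1 \<Rightarrow> 'o2) \<times> ('m1 \<Rightarrow> 'm2) \<Rightarrow> bool" where
  "qs_morphism A B F \<longleftrightarrow>
     (\<forall>a\<in>Obj A. fst F a \<in> Obj B) \<and>
     (\<forall>f\<in>Mor A. snd F f \<in> Mor B \<and> Dom B (snd F f) = fst F (Dom A f)
                  \<and> Cod B (snd F f) = fst F (Cod A f)) \<and>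
     (\<forall>a\<in>Obj A. snd F (Idm A a) = Idm B (fst F a)) \<and>
     (\<forall>f\<in>Mor A. \<forall>g\<in>Mor A. Dom A g = Cod A f \<longrightarrow>
        snd F (Comp A g f) = Comp B (snd F g) (snd F f)) \<and>
     (\<forall>\<sigma>\<in>Part A. \<exists>\<tau>\<in>Part B. snd F ` \<sigma> \<subseteq> \<tau>)"

definition qs_prod ::
  "('o1, 'm1) qschemoid \<Rightarrow> ('o2, 'm2) qschemoid \<Rightarrow> ('o1 \<times> 'o2, 'm1 \<times> 'm2) qschemoid" where
  "qs_prod A B = \<lparr> Obj = Obj A \<times> Obj B, Mor = Mor A \<times> Mor B,
       Dom = (\<lambda>(f, g). (Dom A f, Dom B g)), Cod = (\<lambda>(f, g). (Cod A f, Cod B g)),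
       Idm = (\<lambda>(a, b). (Idm A a, Idm B b)),
       Comp = (\<lambda>(f', g') (f, g). (Comp A f' f, Comp B g' g)),
       Part = {\<sigma> \<times> \<tau> | \<sigma> \<tau>. \<sigma> \<in> Part A \<and> \<tau> \<in> Part B} \<rparr>"

(* The quasi-schemoid I = ([1], discrete partition). Objects 0,1; a morphism is a
   pair (target, source) with source \<le> target. *)
definition qs_I :: "(nat, nat \<times> nat) qschemoid" where
  "qs_I = \<lparr> Obj = {0, 1}, Mor = {(0, 0), (1, 1), (1, 0)}, Dom = snd, Cod = fst,
            Idm = (\<lambda>i. (i, i)), Comp = (\<lambda>g f. (fst g, snd f)),
            Part = {{f} | f. f \<in> {(0, 0), (1, 1), (1, 0)}} \<rparr>"

definition qs_homotopy ::
  "('o1, 'm1) qschemoid \<Rightarrow> ('o2, 'm2) qschemoid \<Rightarrow>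
   ('o1 \<times> nat \<Rightarrow> 'o2) \<times> ('m1 \<times> (nat \<times> nat) \<Rightarrow> 'm2) \<Rightarrow>
   ('o1 \<Rightarrow> 'o2) \<times> ('m1 \<Rightarrow> 'm2) \<Rightarrow> ('o1 \<Rightarrow> 'o2) \<times> ('m1 \<Rightarrow> 'm2) \<Rightarrow> bool" where
  "qs_homotopy A B H F G \<longleftrightarrow>
     qs_morphism (qs_prod A qs_I) B H \<and>
     (\<forall>a\<in>Obj A. fst H (a, 0) = fst F a \<and> fst H (a, 1) = fst G a) \<and>
     (\<forall>f\<in>Mor A. snd H (f, (0, 0)) = snd F f \<and> snd H (f, (1, 1)) = snd G f)"

definition qs_htpy_sim ::
  "('o1, 'm1) qschemoid \<Rightarrow> ('o2, 'm2) qschemoid \<Rightarrow>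
   ('o1 \<Rightarrow> 'o2) \<times> ('m1 \<Rightarrow> 'm2) \<Rightarrow> ('o1 \<Rightarrow> 'o2) \<times> ('m1 \<Rightarrow> 'm2) \<Rightarrow> bool" where
  "qs_htpy_sim A B F G \<longleftrightarrow> (\<exists>H. qs_homotopy A B H F G) \<or> (\<exists>H. qs_homotopy A B H G F)"

definition qs_simeq ::
  "('o1, 'm1) qschemoid \<Rightarrow> ('o2, 'm2) qschemoid \<Rightarrow>
   ('o1 \<Rightarrow> 'o2) \<times> ('m1 \<Rightarrow> 'm2) \<Rightarrow> ('o1 \<Rightarrow> 'o2) \<times> ('m1 \<Rightarrow> 'm2) \<Rightarrow> bool" where
  "qs_simeq A B = (qs_htpy_sim A B)\<^sup>*\<^sup>*"

definition qs_comp :: "('o \<Rightarrow> 'o) \<times> ('m \<Rightarrow> 'm) \<Rightarrow> ('o \<Rightarrow> 'o) \<times> ('m \<Rightarrow> 'm) \<Rightarrow> ('o \<Rightarrow> 'o) \<times> ('m \<Rightarrow> 'm)" where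
  "qs_comp F G = (fst F \<circ> fst G, snd F \<circ> snd G)"

definition qs_idmor :: "('o \<Rightarrow> 'o) \<times> ('m \<Rightarrow> 'm)" where
  "qs_idmor = (id, id)"

definition self_heq :: "('o, 'm) qschemoid \<Rightarrow> ('o \<Rightarrow> 'o) \<times> ('m \<Rightarrow> 'm) \<Rightarrow> bool" where
  "self_heq A F \<longleftrightarrow> qs_morphism A A F \<and>
     (\<exists>G. qs_morphism A A G \<and> qs_simeq A A (qs_comp F G) qs_idmor
                           \<and> qs_simeq A A (qs_comp G F) qs_idmor)"

definition hclass :: "('o, 'm) qschemoid \<Rightarrow> ('o \<Rightarrow> 'o) \<times> ('m \<Rightarrow> 'm) \<Rightarrow> (('o \<Rightarrow> 'o) \<times> ('m \<Rightarrow> 'm)) set" where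
  "hclass A F = {G. qs_morphism A A G \<and> qs_simeq A A F G}"

definition haut :: "('o, 'm) qschemoid \<Rightarrow> (('o \<Rightarrow> 'o) \<times> ('m \<Rightarrow> 'm)) set monoid" where
  "haut A = \<lparr> carrier = hclass A ` {F. self_heq A F},
             mult = (\<lambda>X Y. hclass A (qs_comp (SOME F. F \<in> X) (SOME G. G \<in> Y))),
             one = hclass A qs_idmor \<rparr>"

end

theory Submission
  imports Defs
begin

text \<open>
  A morphism of \<open>\<jmath>(X,S)\<close> is determined by its object map, and a homotopy \<open>F \<Rightarrow> G\<close> exists
  exactly when \<open>F\<close> and \<open>G\<close> are morphisms and the mixed map \<open>(x,y) \<mapsto> (g x, f y)\<close> of their
  object maps sends blocks into blocks. For the trivial partition this says: either \<open>g = f\<close> or \<open>g x \<noteq> f x\<close> everywhere, and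
  either \<open>g x = f y\<close> for all \<open>x \<noteq> y\<close> or for none. Self-homotopy equivalences are the
  morphisms with injective object map. With at least three points and \<open>f\<close> injective, \<open>g x = f y\<close>
  for all \<open>x \<noteq> y\<close> would make \<open>f\<close> constant off a point, so homotopic maps coincide and
  \<open>haut\<close> is the group of permutations of \<open>X\<close>. With two points any two bijections are
  homotopic, so \<open>haut\<close> is trivial.
\<close>

definition maps_blocks :: "'a set set \<Rightarrow> 'b set set \<Rightarrow> ('a \<Rightarrow> 'b) \<Rightarrow> bool" where
  "maps_blocks S T h \<longleftrightarrow> (\<forall>\<sigma>\<in>S. \<exists>\<tau>\<in>T. h ` \<sigma> \<subseteq> \<tau>)"

lemma maps_blocks_cong:
  assumes "\<And>p. p \<in> \<Union>S \<Longrightarrow> h p = h' p"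
  shows "maps_blocks S T h \<longleftrightarrow> maps_blocks S T h'"
  unfolding maps_blocks_def using assms by (metis (no_types, lifting) UnionI image_cong)

lemma maps_blocks_map_prod_cong:
  assumes "\<Union>S \<subseteq> X \<times> X" "\<And>x. x \<in> X \<Longrightarrow> f x = f' x" "\<And>x. x \<in> X \<Longrightarrow> g x = g' x"
  shows "maps_blocks S T (map_prod f g) \<longleftrightarrow> maps_blocks S T (map_prod f' g')"
  using assms by (intro maps_blocks_cong) auto

lemma jmath_simps [simp]:
  "Obj (jmath X S) = X" "Mor (jmath X S) = X \<times> X" "Dom (jmath X S) = snd" "Cod (jmath X S) = fst"
  "Idm (jmath X S) = (\<lambda>x. (x, x))" "Comp (jmath X S) = (\<lambda>g f. (fst g, snd f))" "Part (jmath X S) = S"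
  by (simp_all add: jmath_def)

lemma qs_prod_simps [simp]:
  "Obj (qs_prod A B) = Obj A \<times> Obj B" "Mor (qs_prod A B) = Mor A \<times> Mor B"
  "Dom (qs_prod A B) (f, g) = (Dom A f, Dom B g)" "Cod (qs_prod A B) (f, g) = (Cod A f, Cod B g)"
  "Idm (qs_prod A B) (a, b) = (Idm A a, Idm B b)"
  "Comp (qs_prod A B) (f', g') (f, g) = (Comp A f' f, Comp B g' g)"
  "Part (qs_prod A B) = {\<sigma> \<times> \<tau> | \<sigma> \<tau>. \<sigma> \<in> Part A \<and> \<tau> \<in> Part B}"
  by (simp_all add: qs_prod_def)

lemma qs_I_simps [simp]:
  "Obj qs_I = {0, 1}" "Mor qs_I = {(0, 0), (1, 1), (1, 0)}" "Dom qs_I = snd" "Cod qs_I = fst"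
  "Idm qs_I = (\<lambda>i. (i, i))" "Comp qs_I = (\<lambda>g f. (fst g, snd f))"
  "Part qs_I = {{f} | f. f \<in> {(0, 0), (1, 1), (1, 0)}}"
  by (simp_all add: qs_I_def)

lemma qs_morphism_comp:
  assumes F: "qs_morphism A A F" and G: "qs_morphism A A G"
  shows "qs_morphism A A (qs_comp F G)"
proof -
  have "maps_blocks (Part A) (Part A) (snd F \<circ> snd G)"
    using F G unfolding qs_morphism_def maps_blocks_def image_comp[symmetric]
    by (meson image_mono order_trans)
  moreover have "snd F (snd G (Comp A g f)) = Comp A (snd F (snd G g)) (snd F (snd G f))"
    if "f \<in> Mor A" "g \<in> Mor A" "Dom A g = Cod A f" for f g
    using F G that unfolding qs_morphism_def by metis
  ultimately show ?thesis
    using F G unfolding qs_morphism_def maps_blocks_def[symmetric] qs_comp_def by auto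
qed

lemma qs_morphism_into_jmath:
  assumes "qs_morphism A (jmath Y T) F" "m \<in> Mor A"
  shows "snd F m = (fst F (Cod A m), fst F (Dom A m))"
  using assms unfolding qs_morphism_def by (simp add: prod_eq_iff)

lemma qs_morphism_jmath_iff:
  assumes "\<Union>S \<subseteq> X \<times> X"
  shows "qs_morphism (jmath X S) (jmath Y T) F \<longleftrightarrow>
     fst F ` X \<subseteq> Y \<and> (\<forall>x\<in>X. \<forall>y\<in>X. snd F (x, y) = (fst F x, fst F y))
       \<and> maps_blocks S T (map_prod (fst F) (fst F))"
proof -
  have "maps_blocks S T (snd F) \<longleftrightarrow> maps_blocks S T (map_prod (fst F) (fst F))"
    if "\<forall>x\<in>X. \<forall>y\<in>X. snd F (x, y) = (fst F x, fst F y)"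
    using that assms by (intro maps_blocks_cong) auto
  then show ?thesis
    unfolding qs_morphism_def maps_blocks_def[symmetric] by (auto simp: prod_eq_iff mem_Times_iff)
qed

definition htpy_of :: "('a \<Rightarrow> 'b) \<Rightarrow> ('a \<Rightarrow> 'b) \<Rightarrow>
    ('a \<times> nat \<Rightarrow> 'b) \<times> (('a \<times> 'a) \<times> (nat \<times> nat) \<Rightarrow> 'b \<times> 'b)" where
  "htpy_of f g = (\<lambda>(a, i). if i = 0 then f a else g a,
     \<lambda>((x, y), (i, j)). (if i = 0 then f x else g x, if j = 0 then f y else g y))"

lemma htpy_of_simps [simp]:
  "fst (htpy_of f g) (a, i) = (if i = 0 then f a else g a)"
  "snd (htpy_of f g) ((x, y), (i, j)) = (if i = 0 then f x else g x, if j = 0 then f y else g y)"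
  by (simp_all add: htpy_of_def)

lemma image_snd_htpy_of:
  "snd (htpy_of f g) ` (\<sigma> \<times> {(i, j)}) = map_prod (if i = 0 then f else g) (if j = 0 then f else g) ` \<sigma>"
  by (force simp: image_iff)

lemma qs_homotopy_htpy_of:
  assumes S: "\<Union>S \<subseteq> X \<times> X"
    and F: "qs_morphism (jmath X S) (jmath Y T) F" and G: "qs_morphism (jmath X S) (jmath Y T) G"
    and GF: "maps_blocks S T (map_prod (fst G) (fst F))"
  shows "qs_homotopy (jmath X S) (jmath Y T) (htpy_of (fst F) (fst G)) F G"
proof -
  let ?P = "qs_prod (jmath X S) qs_I" and ?H = "htpy_of (fst F) (fst G)"
  note F' = F[unfolded qs_morphism_jmath_iff[OF S]] and G' = G[unfolded qs_morphism_jmath_iff[OF S]]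
  have obj: "\<forall>a\<in>Obj ?P. fst ?H a \<in> Obj (jmath Y T)"
    using F' G' by auto
  have mor: "\<forall>m\<in>Mor ?P. snd ?H m \<in> Mor (jmath Y T) \<and> Dom (jmath Y T) (snd ?H m) = fst ?H (Dom ?P m)
      \<and> Cod (jmath Y T) (snd ?H m) = fst ?H (Cod ?P m)" (is "\<forall>m\<in>_. ?mor m")
  proof
    fix m assume "m \<in> Mor ?P"
    then obtain x y i j where "m = ((x, y), (i, j))" "x \<in> X" "y \<in> X" by auto
    with F' G' show "?mor m" by auto
  qed
  have idm: "\<forall>a\<in>Obj ?P. snd ?H (Idm ?P a) = Idm (jmath Y T) (fst ?H a)"
    by auto
  have comp: "\<forall>f\<in>Mor ?P. \<forall>g\<in>Mor ?P. Dom ?P g = Cod ?P f \<longrightarrow>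
      snd ?H (Comp ?P g f) = Comp (jmath Y T) (snd ?H g) (snd ?H f)"
    by auto
  have slice: "maps_blocks S T (map_prod (if i = 0 then fst F else fst G) (if j = 0 then fst F else fst G))"
    if "(i, j) \<in> Mor qs_I" for i j
    using that F' G' GF by auto
  have blocks: "maps_blocks (Part ?P) (Part (jmath Y T)) (snd ?H)"
    unfolding maps_blocks_def
  proof
    fix \<rho> assume "\<rho> \<in> Part ?P"
    then obtain \<sigma> i j where "\<rho> = \<sigma> \<times> {(i, j)}" "\<sigma> \<in> S" "(i, j) \<in> Mor qs_I"
      by auto
    with slice[of i j] show "\<exists>\<tau>\<in>Part (jmath Y T). snd ?H ` \<rho> \<subseteq> \<tau>"
      by (simp add: maps_blocks_def image_snd_htpy_of)
  qed
  have "qs_morphism ?P (jmath Y T) ?H"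
    unfolding qs_morphism_def maps_blocks_def[symmetric] using obj mor idm comp blocks by (intro conjI)
  with F' G' show ?thesis
    unfolding qs_homotopy_def by auto
qed

lemma qs_homotopy_jmathD:
  assumes S: "\<Union>S \<subseteq> X \<times> X" and H: "qs_homotopy (jmath X S) (jmath Y T) H F G"
  shows "qs_morphism (jmath X S) (jmath Y T) F" "qs_morphism (jmath X S) (jmath Y T) G"
    "maps_blocks S T (map_prod (fst G) (fst F))"
proof -
  let ?P = "qs_prod (jmath X S) qs_I" and ?h = "\<lambda>i x. fst H (x, i)"
  have M: "qs_morphism ?P (jmath Y T) H"
    and F0: "\<And>x. x \<in> X \<Longrightarrow> fst F x = ?h 0 x" and G1: "\<And>x. x \<in> X \<Longrightarrow> fst G x = ?h 1 x"
    and Fm: "\<And>m. m \<in> X \<times> X \<Longrightarrow> snd F m = snd H (m, (0, 0))"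
    and Gm: "\<And>m. m \<in> X \<times> X \<Longrightarrow> snd G m = snd H (m, (1, 1))"
    using H unfolding qs_homotopy_def by auto
  have obj: "?h i x \<in> Y" if "x \<in> X" "i \<in> {0, 1}" for x i
    using M that unfolding qs_morphism_def by auto
  have slice: "snd H ((x, y), (i, j)) = (?h i x, ?h j y)"
    if "x \<in> X" "y \<in> X" "(i, j) \<in> Mor qs_I" for x y i j
    using qs_morphism_into_jmath[OF M] that by auto
  have blocks: "maps_blocks S T (map_prod (?h i) (?h j))" if ij: "(i, j) \<in> Mor qs_I" for i j
    unfolding maps_blocks_def
  proof
    fix \<sigma> assume \<sigma>: "\<sigma> \<in> S"
    have "\<sigma> \<times> {(i, j)} \<in> Part ?P"
      using \<sigma> ij by auto
    with M obtain \<tau> where "\<tau> \<in> T" "snd H ` (\<sigma> \<times> {(i, j)}) \<subseteq> \<tau>"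
      unfolding qs_morphism_def by (metis jmath_simps(7))
    moreover have "snd H ` (\<sigma> \<times> {(i, j)}) = map_prod (?h i) (?h j) ` \<sigma>"
    proof -
      have "snd H (p, (i, j)) = map_prod (?h i) (?h j) p" if "p \<in> \<sigma>" for p
        using that \<sigma> S slice ij by auto
      moreover have "\<sigma> \<times> {(i, j)} = (\<lambda>p. (p, (i, j))) ` \<sigma>"
        by auto
      ultimately show ?thesis
        by (simp add: image_image cong: image_cong)
    qed
    ultimately show "\<exists>\<tau>\<in>T. map_prod (?h i) (?h j) ` \<sigma> \<subseteq> \<tau>" by auto
  qed
  show "qs_morphism (jmath X S) (jmath Y T) F"
    unfolding qs_morphism_jmath_iff[OF S]
    using obj Fm slice blocks[of 0 0] maps_blocks_map_prod_cong[OF S F0 F0] F0 by auto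
  show "qs_morphism (jmath X S) (jmath Y T) G"
    unfolding qs_morphism_jmath_iff[OF S]
    using obj Gm slice blocks[of 1 1] maps_blocks_map_prod_cong[OF S G1 G1] G1 by auto
  show "maps_blocks S T (map_prod (fst G) (fst F))"
    using blocks[of 1 0] maps_blocks_map_prod_cong[OF S G1 F0] by auto
qed

text \<open>The mixed map is the image of the morphisms \<open>(x,y) \<times> (0 \<rightarrow> 1)\<close> of \<open>\<jmath>(X,S) \<times> I\<close>.\<close>

lemma ex_qs_homotopy_jmath_iff:
  assumes "\<Union>S \<subseteq> X \<times> X"
  shows "(\<exists>H. qs_homotopy (jmath X S) (jmath Y T) H F G) \<longleftrightarrow>
    qs_morphism (jmath X S) (jmath Y T) F \<and> qs_morphism (jmath X S) (jmath Y T) G \<and>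
    maps_blocks S T (map_prod (fst G) (fst F))"
  using qs_homotopy_jmathD[OF assms] qs_homotopy_htpy_of[OF assms] by blast

lemma qs_htpy_sim_jmath_iff:
  assumes "\<Union>S \<subseteq> X \<times> X"
  shows "qs_htpy_sim (jmath X S) (jmath Y T) F G \<longleftrightarrow>
    qs_morphism (jmath X S) (jmath Y T) F \<and> qs_morphism (jmath X S) (jmath Y T) G \<and>
    (maps_blocks S T (map_prod (fst G) (fst F)) \<or> maps_blocks S T (map_prod (fst F) (fst G)))"
  unfolding qs_htpy_sim_def ex_qs_homotopy_jmath_iff[OF assms] by blast

lemma qs_simeq_jmath_if_eq_on:
  assumes S: "\<Union>S \<subseteq> X \<times> X"
    and F: "qs_morphism (jmath X S) (jmath Y T) F" and G: "qs_morphism (jmath X S) (jmath Y T) G"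
    and FG: "\<And>x. x \<in> X \<Longrightarrow> fst F x = fst G x"
  shows "qs_simeq (jmath X S) (jmath Y T) F G"
proof -
  have "maps_blocks S T (map_prod (fst F) (fst F))"
    using F by (simp add: qs_morphism_jmath_iff[OF S])
  moreover have "maps_blocks S T (map_prod (fst F) (fst F)) \<longleftrightarrow> maps_blocks S T (map_prod (fst G) (fst F))"
    by (rule maps_blocks_map_prod_cong[OF S]) (simp_all add: FG)
  ultimately have "maps_blocks S T (map_prod (fst G) (fst F))"
    by blast
  with F G have "qs_htpy_sim (jmath X S) (jmath Y T) F G"
    by (simp add: qs_htpy_sim_jmath_iff[OF S])
  then show ?thesis
    unfolding qs_simeq_def by (rule r_into_rtranclp)
qed

lemma qs_simeq_sym:
  assumes "qs_simeq A B F G"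
  shows "qs_simeq A B G F"
proof -
  have sim: "qs_htpy_sim A B = symclp (\<lambda>F G. \<exists>H. qs_homotopy A B H F G)"
    by (simp add: fun_eq_iff qs_htpy_sim_def symclp_def)
  from assms show ?thesis
    unfolding qs_simeq_def sim by (rule sympD[OF symp_rtranclp_symclp])
qed

lemma hclass_eq_if_qs_simeq:
  assumes "qs_simeq A A F G"
  shows "hclass A F = hclass A G"
proof -
  have "qs_simeq A A F K \<longleftrightarrow> qs_simeq A A G K" for K
    using assms qs_simeq_sym[OF assms] unfolding qs_simeq_def by (meson rtranclp_trans)
  then show ?thesis
    by (simp add: hclass_def)
qed

lemma qs_morphism_idmor: "qs_morphism A A qs_idmor"
  by (simp add: qs_morphism_def qs_idmor_def) blast

lemma self_mem_hclass: "qs_morphism A A F \<Longrightarrow> F \<in> hclass A F"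
  by (simp add: hclass_def qs_simeq_def)

definition triv_scheme :: "'a set \<Rightarrow> ('a \<times> 'a) set set" where
  "triv_scheme X = {Id_on X, X \<times> X - Id_on X}"

abbreviation jtriv :: "'a set \<Rightarrow> ('a, 'a \<times> 'a) qschemoid" where
  "jtriv X \<equiv> jmath X (triv_scheme X)"

lemma Union_triv_scheme_subset: "\<Union>(triv_scheme X) \<subseteq> X \<times> X"
  by (auto simp: triv_scheme_def Id_on_iff)

lemmas qs_morphism_jtriv_iff = qs_morphism_jmath_iff[OF Union_triv_scheme_subset]
lemmas qs_htpy_sim_jtriv_iff = qs_htpy_sim_jmath_iff[OF Union_triv_scheme_subset]
lemmas qs_simeq_jtriv_if_eq_on = qs_simeq_jmath_if_eq_on[OF Union_triv_scheme_subset]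

lemma maps_blocks_triv_scheme_iff:
  assumes "f ` X \<subseteq> Y" "g ` X \<subseteq> Y"
  shows "maps_blocks (triv_scheme X) (triv_scheme Y) (map_prod g f) \<longleftrightarrow>
    ((\<forall>x\<in>X. g x = f x) \<or> (\<forall>x\<in>X. g x \<noteq> f x)) \<and>
    ((\<forall>x\<in>X. \<forall>y\<in>X. x \<noteq> y \<longrightarrow> g x = f y) \<or> (\<forall>x\<in>X. \<forall>y\<in>X. x \<noteq> y \<longrightarrow> g x \<noteq> f y))"
proof -
  have diagonal: "map_prod g f ` Id_on X = (\<lambda>x. (g x, f x)) ` X"
    by (force simp: Id_on_def)
  have off_diagonal: "map_prod g f ` (X \<times> X - Id_on X) = {(g x, f y) | x y. x \<in> X \<and> y \<in> X \<and> x \<noteq> y}"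
    by (force simp: Id_on_iff)
  have "map_prod g f ` Id_on X \<subseteq> Id_on Y \<longleftrightarrow> (\<forall>x\<in>X. g x = f x)"
    "map_prod g f ` Id_on X \<subseteq> Y \<times> Y - Id_on Y \<longleftrightarrow> (\<forall>x\<in>X. g x \<noteq> f x)"
    "map_prod g f ` (X \<times> X - Id_on X) \<subseteq> Id_on Y \<longleftrightarrow> (\<forall>x\<in>X. \<forall>y\<in>X. x \<noteq> y \<longrightarrow> g x = f y)"
    "map_prod g f ` (X \<times> X - Id_on X) \<subseteq> Y \<times> Y - Id_on Y \<longleftrightarrow> (\<forall>x\<in>X. \<forall>y\<in>X. x \<noteq> y \<longrightarrow> g x \<noteq> f y)"
    unfolding diagonal off_diagonal using assms by (auto simp: Id_on_iff) (force simp: Id_on_iff)+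
  then show ?thesis
    by (simp add: maps_blocks_def triv_scheme_def)
qed

lemma card_le_2_if_inj_on_const_off_point:
  assumes "finite X" "inj_on h X" "x\<^sub>0 \<in> X" "\<And>y. y \<in> X \<Longrightarrow> y \<noteq> x\<^sub>0 \<Longrightarrow> h y = c"
  shows "card X \<le> 2"
proof -
  have "card (X - {x\<^sub>0}) \<le> Suc 0"
    unfolding card_le_Suc0_iff_eq[OF finite_Diff[OF assms(1)]]
    using assms(2,4) by (auto simp: inj_on_def)
  then show ?thesis
    using assms(1,3) by (simp add: card_Diff_singleton)
qed

lemma eq_on_if_maps_blocks_triv_scheme:
  assumes fin: "finite X" and card: "3 \<le> card X" and f: "f ` X \<subseteq> X" and g: "g ` X \<subseteq> X"
    and inj: "inj_on f X \<or> inj_on g X"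
    and blocks: "maps_blocks (triv_scheme X) (triv_scheme X) (map_prod g f)"
    and x: "x \<in> X"
  shows "g x = f x"
proof -
  have "(\<forall>y\<in>X. \<forall>z\<in>X. y \<noteq> z \<longrightarrow> g y = f z) \<or> (\<forall>y\<in>X. \<forall>z\<in>X. y \<noteq> z \<longrightarrow> g y \<noteq> f z)"
    using blocks by (simp add: maps_blocks_triv_scheme_iff[OF f g])
  moreover have "\<not> (\<forall>y\<in>X. \<forall>z\<in>X. y \<noteq> z \<longrightarrow> g y = f z)"
  proof
    assume eq: "\<forall>y\<in>X. \<forall>z\<in>X. y \<noteq> z \<longrightarrow> g y = f z"
    from inj have "card X \<le> 2"
    proof
      assume "inj_on f X"
      then show ?thesis
        by (rule card_le_2_if_inj_on_const_off_point[OF fin _ x, of _ "g x"]) (use eq x in fastforce)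
    next
      assume "inj_on g X"
      then show ?thesis
        by (rule card_le_2_if_inj_on_const_off_point[OF fin _ x, of _ "f x"]) (use eq x in fastforce)
    qed
    with card show False by simp
  qed
  ultimately have off_diagonal: "g y \<noteq> f z" if "y \<in> X" "z \<in> X" "y \<noteq> z" for y z
    using that by blast
  from inj show ?thesis
  proof
    assume "inj_on f X"
    then have "g x \<in> f ` X"
      using endo_inj_surj[OF fin f] g x by blast
    then obtain y where "y \<in> X" "g x = f y" by blast
    with off_diagonal x show ?thesis by metis
  next
    assume "inj_on g X"
    then have "f x \<in> g ` X"
      using endo_inj_surj[OF fin g] f x by blast
    then obtain y where "y \<in> X" "f x = g y" by blast
    with off_diagonal x show ?thesis by metis
  qed
qed

lemma inj_on_iff_if_maps_blocks_triv_scheme: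
  assumes "card X = 2" and f: "f ` X \<subseteq> X" and g: "g ` X \<subseteq> X"
    and blocks: "maps_blocks (triv_scheme X) (triv_scheme X) (map_prod g f)"
  shows "inj_on f X \<longleftrightarrow> inj_on g X"
proof -
  obtain a b where X: "X = {a, b}" "a \<noteq> b"
    using assms(1) card_2_iff by metis
  have "(\<forall>x\<in>X. g x = f x) \<or> (\<forall>x\<in>X. g x \<noteq> f x)"
    using blocks by (simp add: maps_blocks_triv_scheme_iff[OF f g])
  then have "(g a = f a \<and> g b = f b) \<or> (g a \<noteq> f a \<and> g b \<noteq> f b)"
    using X(1) by auto
  moreover have "f a \<in> {a, b}" "f b \<in> {a, b}" "g a \<in> {a, b}" "g b \<in> {a, b}"
    using f g X(1) by auto
  moreover have "inj_on f X \<longleftrightarrow> f a \<noteq> f b" "inj_on g X \<longleftrightarrow> g a \<noteq> g b"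
    using X by (auto simp: inj_on_def)
  ultimately show ?thesis
    by (smt (verit) insertE singletonD)
qed

lemma maps_blocks_triv_scheme_if_card_2:
  assumes "card X = 2" and f: "f ` X \<subseteq> X" and g: "g ` X \<subseteq> X"
    and "inj_on f X" "inj_on g X"
  shows "maps_blocks (triv_scheme X) (triv_scheme X) (map_prod g f)"
proof -
  obtain a b where X: "X = {a, b}" "a \<noteq> b"
    using assms(1) card_2_iff by metis
  have "f a \<in> {a, b}" "f b \<in> {a, b}" "g a \<in> {a, b}" "g b \<in> {a, b}" "f a \<noteq> f b" "g a \<noteq> g b"
    using assms X by auto
  then have pointwise: "((g a = f a \<and> g b = f b) \<or> (g a \<noteq> f a \<and> g b \<noteq> f b)) \<and>
      ((g a = f b \<and> g b = f a) \<or> (g a \<noteq> f b \<and> g b \<noteq> f a))"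
    by (smt (verit) insertE singletonD)
  show ?thesis
    by (subst maps_blocks_triv_scheme_iff[OF f g]) (use X pointwise in auto)
qed

definition jfun :: "('a \<Rightarrow> 'b) \<Rightarrow> ('a \<Rightarrow> 'b) \<times> ('a \<times> 'a \<Rightarrow> 'b \<times> 'b)" where
  "jfun f = (f, map_prod f f)"

lemma fst_jfun [simp]: "fst (jfun f) = f"
  by (simp add: jfun_def)

lemma qs_morphism_jfun_jtriv:
  assumes "f ` X \<subseteq> Y" "inj_on f X"
  shows "qs_morphism (jtriv X) (jtriv Y) (jfun f)"
proof -
  have "maps_blocks (triv_scheme X) (triv_scheme Y) (map_prod f f)"
    using assms by (simp add: maps_blocks_triv_scheme_iff inj_on_def) blast
  with assms(1) show ?thesis
    by (simp add: qs_morphism_jtriv_iff jfun_def)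
qed

lemma qs_htpy_sim_jtrivD:
  assumes "qs_htpy_sim (jtriv X) (jtriv X) F G"
  shows "fst F ` X \<subseteq> X" "fst G ` X \<subseteq> X"
    "maps_blocks (triv_scheme X) (triv_scheme X) (map_prod (fst G) (fst F)) \<or>
     maps_blocks (triv_scheme X) (triv_scheme X) (map_prod (fst F) (fst G))"
  using assms by (simp_all add: qs_htpy_sim_jtriv_iff qs_morphism_jtriv_iff)

lemma qs_simeq_jtriv_eq_on:
  assumes fin: "finite X" and card: "3 \<le> card X" and inj: "inj_on (fst F) X"
    and "qs_simeq (jtriv X) (jtriv X) F G"
  shows "\<forall>x\<in>X. fst G x = fst F x"
  using assms(4) unfolding qs_simeq_def
proof (induction rule: rtranclp_induct)
  case base
  show ?case by simp
next
  case (step K L)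
  have "inj_on (fst K) X"
    using inj step.IH inj_on_cong by metis
  with qs_htpy_sim_jtrivD[OF step.hyps(2)] have "\<forall>x\<in>X. fst L x = fst K x"
    using eq_on_if_maps_blocks_triv_scheme[OF fin card, of "fst K" "fst L"]
      eq_on_if_maps_blocks_triv_scheme[OF fin card, of "fst L" "fst K"] by metis
  with step.IH show ?case by simp
qed

lemma qs_simeq_jtriv_inj_on_iff:
  assumes "card X = 2" "qs_simeq (jtriv X) (jtriv X) F G"
  shows "inj_on (fst F) X \<longleftrightarrow> inj_on (fst G) X"
  using assms(2) unfolding qs_simeq_def
proof (induction rule: rtranclp_induct)
  case base
  show ?case by simp
next
  case (step K L)
  with qs_htpy_sim_jtrivD[OF step.hyps(2)] have "inj_on (fst K) X \<longleftrightarrow> inj_on (fst L) X"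
    using inj_on_iff_if_maps_blocks_triv_scheme[OF assms(1), of "fst K" "fst L"]
      inj_on_iff_if_maps_blocks_triv_scheme[OF assms(1), of "fst L" "fst K"] by metis
  with step.IH show ?case by simp
qed

lemma self_heq_jtriv_iff:
  assumes fin: "finite X" and card: "2 \<le> card X"
  shows "self_heq (jtriv X) F \<longleftrightarrow> qs_morphism (jtriv X) (jtriv X) F \<and> inj_on (fst F) X"
proof
  assume "self_heq (jtriv X) F"
  then obtain G where F: "qs_morphism (jtriv X) (jtriv X) F"
    and GF: "qs_simeq (jtriv X) (jtriv X) (qs_comp G F) qs_idmor"
    unfolding self_heq_def by blast
  have "inj_on (fst (qs_comp G F)) X"
  proof (cases "card X = 2")
    case True
    then show ?thesis
      using qs_simeq_jtriv_inj_on_iff[OF True GF] by (simp add: qs_idmor_def)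
  next
    case False
    with card have "3 \<le> card X" by simp
    from qs_simeq_jtriv_eq_on[OF fin this _ qs_simeq_sym[OF GF]]
    have "\<forall>x\<in>X. fst (qs_comp G F) x = x"
      by (simp add: qs_idmor_def)
    then show ?thesis
      by (simp add: inj_on_def)
  qed
  with F show "qs_morphism (jtriv X) (jtriv X) F \<and> inj_on (fst F) X"
    by (auto simp: qs_comp_def dest: inj_on_imageI2)
next
  assume "qs_morphism (jtriv X) (jtriv X) F \<and> inj_on (fst F) X"
  then have F: "qs_morphism (jtriv X) (jtriv X) F" and inj: "inj_on (fst F) X"
    by blast+
  have bij: "bij_betw (fst F) X X"
    using F inj endo_inj_surj[OF fin] by (auto simp: qs_morphism_jtriv_iff bij_betw_def)
  define G where "G = jfun (inv_into X (fst F))"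
  have G: "qs_morphism (jtriv X) (jtriv X) G"
    unfolding G_def using bij_betw_inv_into[OF bij]
    by (intro qs_morphism_jfun_jtriv) (auto simp: bij_betw_def)
  have "qs_simeq (jtriv X) (jtriv X) (qs_comp F G) qs_idmor"
    by (rule qs_simeq_jtriv_if_eq_on[OF qs_morphism_comp[OF F G] qs_morphism_idmor])
      (use bij in \<open>simp add: G_def jfun_def qs_comp_def qs_idmor_def bij_betw_inv_into_right\<close>)
  moreover have "qs_simeq (jtriv X) (jtriv X) (qs_comp G F) qs_idmor"
    by (rule qs_simeq_jtriv_if_eq_on[OF qs_morphism_comp[OF G F] qs_morphism_idmor])
      (use bij in \<open>simp add: G_def jfun_def qs_comp_def qs_idmor_def bij_betw_inv_into_left\<close>)
  ultimately show "self_heq (jtriv X) F"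
    unfolding self_heq_def using F G by blast
qed

lemma hclass_jtriv:
  assumes fin: "finite X" and card: "3 \<le> card X"
    and F: "qs_morphism (jtriv X) (jtriv X) F" and inj: "inj_on (fst F) X"
  shows "hclass (jtriv X) F = {G. qs_morphism (jtriv X) (jtriv X) G \<and> (\<forall>x\<in>X. fst G x = fst F x)}"
  unfolding hclass_def
  using qs_simeq_jtriv_eq_on[OF fin card inj] qs_simeq_jtriv_if_eq_on[OF F]
  by (metis (no_types, lifting))

lemma carrier_haut_jtriv_card_2:
  assumes card: "card X = 2"
  shows "carrier (haut (jtriv X)) = {hclass (jtriv X) qs_idmor}"
proof -
  have fin: "finite X"
    using card card_ge_0_finite by force
  have idmor: "qs_morphism (jtriv X) (jtriv X) qs_idmor"
    by (rule qs_morphism_idmor)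
  have "hclass (jtriv X) F = hclass (jtriv X) qs_idmor" if "self_heq (jtriv X) F" for F
  proof -
    from that have F: "qs_morphism (jtriv X) (jtriv X) F" and inj: "inj_on (fst F) X"
      using self_heq_jtriv_iff[OF fin] card by auto
    have "fst F ` X \<subseteq> X"
      using F by (simp add: qs_morphism_jtriv_iff)
    then have "maps_blocks (triv_scheme X) (triv_scheme X) (map_prod (fst qs_idmor) (fst F))"
      using maps_blocks_triv_scheme_if_card_2[OF card _ _ inj, of id] by (simp add: qs_idmor_def)
    with F idmor have "qs_htpy_sim (jtriv X) (jtriv X) F qs_idmor"
      unfolding qs_htpy_sim_jtriv_iff by blast
    then show ?thesis
      by (intro hclass_eq_if_qs_simeq) (simp add: qs_simeq_def r_into_rtranclp)
  qed
  moreover have "self_heq (jtriv X) qs_idmor"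
    using self_heq_jtriv_iff[OF fin] card idmor by (simp add: qs_idmor_def)
  ultimately have "hclass (jtriv X) ` {F. self_heq (jtriv X) F} = {hclass (jtriv X) qs_idmor}"
    by blast
  then show ?thesis
    by (simp add: haut_def)
qed

lemma sym_group_iso_if_permutation_representation:
  assumes fin: "finite X"
    and bij: "bij_betw \<phi> {p. p permutes X} (carrier M)"
    and mult: "\<And>p q. p permutes X \<Longrightarrow> q permutes X \<Longrightarrow> \<phi> (p \<circ> q) = \<phi> p \<otimes>\<^bsub>M\<^esub> \<phi> q"
  shows "sym_group (card X) \<cong> M"
proof -
  define n where "n = card X"
  obtain e where e: "bij_betw e {1..n} X"
    using ex_bij_betw_nat_finite_1[OF fin] n_def by blast
  let ?m = "map_permutation {1..n} e" and ?m' = "map_permutation X (inv_into {1..n} e)"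
  have "bij_betw ?m {p. p permutes {1..n}} {p. p permutes X}"
  proof (rule bij_betwI)
    show "?m \<in> {p. p permutes {1..n}} \<rightarrow> {p. p permutes X}"
      using map_permutation_permutes[OF e] by blast
    show "?m' \<in> {p. p permutes X} \<rightarrow> {p. p permutes {1..n}}"
      using map_permutation_permutes[OF bij_betw_inv_into[OF e]] by blast
    show "?m' (?m p) = p" if "p \<in> {p. p permutes {1..n}}" for p
      using that e by (intro map_permutation_compose_inv) (auto simp: bij_betw_inv_into_left)
    show "?m (?m' q) = q" if "q \<in> {p. p permutes X}" for q
      using that e by (intro map_permutation_compose_inv bij_betw_inv_into) (auto simp: bij_betw_inv_into_right)
  qed
  moreover have "carrier (sym_group n) = {p. p permutes {1..n}}"
    by (auto simp: sym_group_carrier)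
  ultimately have "bij_betw (\<phi> \<circ> ?m) (carrier (sym_group n)) (carrier M)"
    using bij by (auto intro: bij_betw_trans)
  moreover have "(\<phi> \<circ> ?m) (p \<otimes>\<^bsub>sym_group n\<^esub> q) = (\<phi> \<circ> ?m) p \<otimes>\<^bsub>M\<^esub> (\<phi> \<circ> ?m) q"
    if "p \<in> carrier (sym_group n)" "q \<in> carrier (sym_group n)" for p q
    using that map_permutation_compose'[OF bij_betw_imp_inj_on[OF e]]
      mult[OF map_permutation_permutes[OF e] map_permutation_permutes[OF e]]
    by (simp add: sym_group_carrier sym_group_mult)
  ultimately have "\<phi> \<circ> ?m \<in> iso (sym_group n) M"
    by (auto intro!: isoI homI dest: bij_betwE)
  then show ?thesis
    unfolding n_def by (rule is_isoI)
qed

lemma qs_morphism_jfun_if_permutes: "p permutes X \<Longrightarrow> qs_morphism (jtriv X) (jtriv X) (jfun p)"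
  by (intro qs_morphism_jfun_jtriv) (auto simp: permutes_image permutes_inj_on)

lemma bij_betw_hclass_jfun:
  assumes fin: "finite X" and card: "3 \<le> card X"
  shows "bij_betw (\<lambda>p. hclass (jtriv X) (jfun p)) {p. p permutes X} (carrier (haut (jtriv X)))"
proof (rule bij_betw_imageI)
  show "inj_on (\<lambda>p. hclass (jtriv X) (jfun p)) {p. p permutes X}"
  proof (rule inj_onI)
    fix p q assume p: "p \<in> {p. p permutes X}" and q: "q \<in> {p. p permutes X}"
      and eq: "hclass (jtriv X) (jfun p) = hclass (jtriv X) (jfun q)"
    have "jfun q \<in> hclass (jtriv X) (jfun q)"
      using q by (simp add: self_mem_hclass qs_morphism_jfun_if_permutes)
    then have "jfun q \<in> hclass (jtriv X) (jfun p)"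
      by (simp add: eq)
    then have "\<forall>x\<in>X. q x = p x"
      using hclass_jtriv[OF fin card qs_morphism_jfun_if_permutes] p by (simp add: permutes_inj_on)
    with p q show "p = q"
      by (metis mem_Collect_eq permutes_not_in ext)
  qed
  have carrier: "carrier (haut (jtriv X)) =
      hclass (jtriv X) ` {F. qs_morphism (jtriv X) (jtriv X) F \<and> inj_on (fst F) X}"
    using self_heq_jtriv_iff[OF fin] card by (simp add: haut_def)
  show "(\<lambda>p. hclass (jtriv X) (jfun p)) ` {p. p permutes X} = carrier (haut (jtriv X))"
  proof
    show "(\<lambda>p. hclass (jtriv X) (jfun p)) ` {p. p permutes X} \<subseteq> carrier (haut (jtriv X))"
      unfolding carrier
      by (intro image_subsetI imageI) (simp add: qs_morphism_jfun_if_permutes permutes_inj_on)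
    show "carrier (haut (jtriv X)) \<subseteq> (\<lambda>p. hclass (jtriv X) (jfun p)) ` {p. p permutes X}"
    proof
      fix C assume "C \<in> carrier (haut (jtriv X))"
      then obtain F where C: "C = hclass (jtriv X) F"
        and F: "qs_morphism (jtriv X) (jtriv X) F" and inj: "inj_on (fst F) X"
        unfolding carrier by blast
      have "bij_betw (fst F) X X"
        using F inj endo_inj_surj[OF fin] by (auto simp: qs_morphism_jtriv_iff bij_betw_def)
      then have p: "restrict_id (fst F) X permutes X"
        by (rule permutes_restrict_id)
      have "qs_simeq (jtriv X) (jtriv X) F (jfun (restrict_id (fst F) X))"
        by (rule qs_simeq_jtriv_if_eq_on[OF F qs_morphism_jfun_if_permutes[OF p]]) simp
      then have "C = hclass (jtriv X) (jfun (restrict_id (fst F) X))"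
        unfolding C by (rule hclass_eq_if_qs_simeq)
      with p show "C \<in> (\<lambda>p. hclass (jtriv X) (jfun p)) ` {p. p permutes X}"
        by blast
    qed
  qed
qed

lemma hclass_jfun_comp:
  assumes fin: "finite X" and card: "3 \<le> card X" and p: "p permutes X" and q: "q permutes X"
  shows "hclass (jtriv X) (jfun (p \<circ> q)) = hclass (jtriv X) (jfun p) \<otimes>\<^bsub>haut (jtriv X)\<^esub> hclass (jtriv X) (jfun q)"
proof -
  define F where "F = (SOME F. F \<in> hclass (jtriv X) (jfun p))"
  define G where "G = (SOME G. G \<in> hclass (jtriv X) (jfun q))"
  have "F \<in> hclass (jtriv X) (jfun p)" "G \<in> hclass (jtriv X) (jfun q)"
    unfolding F_def G_def using self_mem_hclass qs_morphism_jfun_if_permutes p q by (metis someI)+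
  then have F: "qs_morphism (jtriv X) (jtriv X) F" "\<forall>x\<in>X. fst F x = p x"
    and G: "qs_morphism (jtriv X) (jtriv X) G" "\<forall>x\<in>X. fst G x = q x"
    using hclass_jtriv[OF fin card qs_morphism_jfun_if_permutes] p q by (auto simp: permutes_inj_on)
  have "hclass (jtriv X) (jfun (p \<circ> q)) = hclass (jtriv X) (qs_comp F G)"
    using F G p q
    by (intro hclass_eq_if_qs_simeq qs_simeq_jtriv_if_eq_on qs_morphism_comp
        qs_morphism_jfun_if_permutes permutes_compose) (auto simp: qs_comp_def permutes_in_image)
  also have "\<dots> = hclass (jtriv X) (jfun p) \<otimes>\<^bsub>haut (jtriv X)\<^esub> hclass (jtriv X) (jfun q)"
    by (simp add: haut_def F_def G_def)
  finally show ?thesis .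
qed

lemma haut_jtriv_iso_sym_group:
  assumes "finite X" "3 \<le> card X"
  shows "haut (jtriv X) \<cong> sym_group (card X)"
proof -
  have "sym_group (card X) \<cong> haut (jtriv X)"
    using sym_group_iso_if_permutation_representation[OF assms(1) bij_betw_hclass_jfun[OF assms]]
      hclass_jfun_comp[OF assms] by blast
  then show ?thesis
    by (rule group.iso_sym[OF sym_group_is_group])
qed

theorem theorem4p4:
  fixes X :: "'a set" and S :: "('a \<times> 'a) set set"
  assumes "assoc_scheme X S"
    and "S = {Id_on X, (X \<times> X) - Id_on X}"
  shows "(card X \<ge> 3 \<longrightarrow> haut (jmath X S) \<cong> sym_group (card X))
       \<and> (card X = 2 \<longrightarrow> card (carrier (haut (jmath X S))) = 1)"
proof -
  have "finite X"
    using assms(1) unfolding assoc_scheme_def by blast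
  moreover have "jmath X S = jtriv X"
    by (simp add: assms(2) triv_scheme_def)
  ultimately show ?thesis
    using haut_jtriv_iso_sym_group[of X] by (simp add: carrier_haut_jtriv_card_2)
qed

end
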